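(* Let $P$ be a bounded poset of finite length and $I\subset P$ a proper ideal. Then: (i) $P$ and $\mathrm{Bier}(P,I)$ have the same length $n$. (ii) $\mathrm{Bier}(P,I)$ is graded if and only if $P$ is graded; in that case the rank of an element $[x,y]\neq\hat1$ of $\mathrm{Bier}(P,I)$ is $\mathrm{rank}_P(x)+(n-\mathrm{rank}_P(y))$. (iii) For $[x,y]\in\mathrm{Bier}(P,I)$ one has $[[x,y],\hat1]\cong \mathrm{Bier}([x,y],I\cap[x,y])$, and for $[x',y']\le[x,y]$ in $\mathrm{Bier}(P,I)$ (i.e. $x'\le x<y\le y'$) one has $[[x',y'],[x,y]]\cong [x',x]\times[y,y']^{\mathrm{op}}$, where $[y,y']^{\mathrm{op}}$ is the interval $[y,y']$ of $P$ with the opposite order. (iv) If $P$ is a lattice, then $\mathrm{Bier}(P,I)$ is a lattice.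
   Context: All posets have finite length. A poset is bounded if it has a unique minimum $\hat0$ and maximum $\hat1$; it is graded if it is bounded and all maximal chains have the same length. An ideal of $P$ is a subset $I$ with $x\le y$, $y\in I$ implying $x\in I$; it is proper if $I\neq\emptyset$ and $I\neq P$ (so $\hat0\in I$, $\hat1\notin I$). For a bounded poset $P$ of finite length and a proper ideal $I$, the Bier poset $\mathrm{Bier}(P,I)$ consists of all intervals $[x,y]=\{z\in P: x\le z\le y\}$ of $P$ with $x\in I$ and $y\notin I$, ordered by reversed inclusion ($[x',y']\le[x,y]$ iff $x'\le x<y\le y'$), together with an additional top element $\hat1$. Its minimum is $[\hat0,\hat1]$. *)

theory Defs
  imports Main
begin

definition poset_on :: "'a set \<Rightarrow> ('a \<Rightarrow> 'a \<Rightarrow> bool) \<Rightarrow> bool" where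
  "poset_on S le \<longleftrightarrow> (\<forall>x\<in>S. le x x) \<and>
     (\<forall>x\<in>S. \<forall>y\<in>S. le x y \<and> le y x \<longrightarrow> x = y) \<and>
     (\<forall>x\<in>S. \<forall>y\<in>S. \<forall>z\<in>S. le x y \<and> le y z \<longrightarrow> le x z)"

definition chain_on :: "'a set \<Rightarrow> ('a \<Rightarrow> 'a \<Rightarrow> bool) \<Rightarrow> 'a set \<Rightarrow> bool" where
  "chain_on S le C \<longleftrightarrow> C \<subseteq> S \<and> (\<forall>a\<in>C. \<forall>b\<in>C. le a b \<or> le b a)"

definition maximal_chain_on :: "'a set \<Rightarrow> ('a \<Rightarrow> 'a \<Rightarrow> bool) \<Rightarrow> 'a set \<Rightarrow> bool" where
  "maximal_chain_on S le C \<longleftrightarrow> chain_on S le C \<and> (\<forall>D. chain_on S le D \<and> C \<subseteq> D \<longrightarrow> D = C)"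

definition finite_length :: "'a set \<Rightarrow> ('a \<Rightarrow> 'a \<Rightarrow> bool) \<Rightarrow> bool" where
  "finite_length S le \<longleftrightarrow> (\<exists>n. \<forall>C. chain_on S le C \<longrightarrow> finite C \<and> card C \<le> n)"

definition plength :: "'a set \<Rightarrow> ('a \<Rightarrow> 'a \<Rightarrow> bool) \<Rightarrow> nat" where
  "plength S le = (SUP C \<in> {C. chain_on S le C \<and> finite C}. card C - 1)"

definition bounded_poset :: "'a set \<Rightarrow> ('a \<Rightarrow> 'a \<Rightarrow> bool) \<Rightarrow> bool" where
  "bounded_poset S le \<longleftrightarrow> poset_on S le \<and>
     (\<exists>b\<in>S. \<forall>z\<in>S. le b z) \<and> (\<exists>t\<in>S. \<forall>z\<in>S. le z t)"

definition graded :: "'a set \<Rightarrow> ('a \<Rightarrow> 'a \<Rightarrow> bool) \<Rightarrow> bool" where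
  "graded S le \<longleftrightarrow> bounded_poset S le \<and>
     (\<forall>C D. maximal_chain_on S le C \<and> maximal_chain_on S le D \<longrightarrow> card C = card D)"

definition interval :: "'a set \<Rightarrow> ('a \<Rightarrow> 'a \<Rightarrow> bool) \<Rightarrow> 'a \<Rightarrow> 'a \<Rightarrow> 'a set" where
  "interval S le a b = {z \<in> S. le a z \<and> le z b}"

definition prank :: "'a set \<Rightarrow> ('a \<Rightarrow> 'a \<Rightarrow> bool) \<Rightarrow> 'a \<Rightarrow> nat" where
  "prank S le x = plength {z \<in> S. le z x} le"

definition proper_ideal :: "'a set \<Rightarrow> ('a \<Rightarrow> 'a \<Rightarrow> bool) \<Rightarrow> 'a set \<Rightarrow> bool" where
  "proper_ideal S le I \<longleftrightarrow> I \<subseteq> S \<and> (\<forall>x\<in>S. \<forall>y\<in>I. le x y \<longrightarrow> x \<in> I) \<and> I \<noteq> {} \<and> I \<noteq> S"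

text \<open>Bier poset: the interval [x,y] (x in I, y not in I, x \<le> y) is represented by
  Some (x,y) (an interval determines its endpoints); the extra top element is None.
  Order: reversed inclusion, i.e. [x',y'] \<le> [x,y] iff x' \<le> x and y \<le> y'.\<close>
definition bier_carrier :: "'a set \<Rightarrow> ('a \<Rightarrow> 'a \<Rightarrow> bool) \<Rightarrow> 'a set \<Rightarrow> ('a \<times> 'a) option set" where
  "bier_carrier S le I = insert None {Some (x, y) | x y. x \<in> I \<and> y \<in> S - I \<and> le x y}"

fun bier_le :: "('a \<Rightarrow> 'a \<Rightarrow> bool) \<Rightarrow> ('a \<times> 'a) option \<Rightarrow> ('a \<times> 'a) option \<Rightarrow> bool" where
  "bier_le le _ None = True"
| "bier_le le None (Some _) = False"
| "bier_le le (Some (x', y')) (Some (x, y)) = (le x' x \<and> le y y')"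

definition poset_iso :: "'a set \<Rightarrow> ('a \<Rightarrow> 'a \<Rightarrow> bool) \<Rightarrow> 'b set \<Rightarrow> ('b \<Rightarrow> 'b \<Rightarrow> bool) \<Rightarrow> bool" where
  "poset_iso S le T le' \<longleftrightarrow>
     (\<exists>f. bij_betw f S T \<and> (\<forall>a\<in>S. \<forall>b\<in>S. le a b \<longleftrightarrow> le' (f a) (f b)))"

definition prod_le :: "('a \<Rightarrow> 'a \<Rightarrow> bool) \<Rightarrow> ('b \<Rightarrow> 'b \<Rightarrow> bool) \<Rightarrow> 'a \<times> 'b \<Rightarrow> 'a \<times> 'b \<Rightarrow> bool" where
  "prod_le le1 le2 p q \<longleftrightarrow> le1 (fst p) (fst q) \<and> le2 (snd p) (snd q)"

definition is_lattice :: "'a set \<Rightarrow> ('a \<Rightarrow> 'a \<Rightarrow> bool) \<Rightarrow> bool" where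
  "is_lattice S le \<longleftrightarrow> (\<forall>a\<in>S. \<forall>b\<in>S.
     (\<exists>s\<in>S. le a s \<and> le b s \<and> (\<forall>u\<in>S. le a u \<and> le b u \<longrightarrow> le s u)) \<and>
     (\<exists>i\<in>S. le i a \<and> le i b \<and> (\<forall>u\<in>S. le u a \<and> le u b \<longrightarrow> le u i)))"

end

theory Submission
  imports Defs
begin

(* In a maximal chain D consecutive intervals differ in
   exactly one endpoint, since otherwise [x',y] could be inserted between [x,y] and [x',y']; hence
   the endpoints of D form a chain of P with exactly |D| elements, and it is maximal.  Conversely,
   if C is a maximal chain of P and m is the largest element of C in I, the intervals [c,1] for
   c in C \<inter> I and [m,c] for c in C - I form a chain that extends to a maximal chain of Bier(P,I)
   with endpoint set C.  Below [x,y]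
   lies the product [0,x] x [y,1]^op, whose length is the sum of the lengths of the factors; this
   gives the rank formula. *)

section \<open>Chains and length\<close>

lemma
  assumes "poset_on S le"
  shows poset_on_refl: "x \<in> S \<Longrightarrow> le x x"
    and poset_on_antisym: "x \<in> S \<Longrightarrow> y \<in> S \<Longrightarrow> le x y \<Longrightarrow> le y x \<Longrightarrow> x = y"
    and poset_on_trans: "x \<in> S \<Longrightarrow> y \<in> S \<Longrightarrow> z \<in> S \<Longrightarrow> le x y \<Longrightarrow> le y z \<Longrightarrow> le x z"
  using assms unfolding poset_on_def by blast+

lemma poset_on_subset: "poset_on S le \<Longrightarrow> A \<subseteq> S \<Longrightarrow> poset_on A le"
  unfolding poset_on_def by blast

lemma poset_on_converse: "poset_on S le \<Longrightarrow> poset_on S (\<lambda>a b. le b a)"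
  unfolding poset_on_def by blast

lemma poset_on_prod:
  assumes "poset_on S1 le1" "poset_on S2 le2"
  shows "poset_on (S1 \<times> S2) (prod_le le1 le2)"
proof -
  note P = poset_on_refl poset_on_antisym poset_on_trans
  have "p \<in> S1 \<times> S2 \<Longrightarrow> prod_le le1 le2 p p" for p
    unfolding prod_le_def mem_Times_iff by (meson assms P)
  moreover have "p \<in> S1 \<times> S2 \<Longrightarrow> q \<in> S1 \<times> S2 \<Longrightarrow> prod_le le1 le2 p q \<Longrightarrow> prod_le le1 le2 q p \<Longrightarrow> p = q" for p q
    unfolding prod_le_def mem_Times_iff by (meson assms P prod_eqI)
  moreover have "p \<in> S1 \<times> S2 \<Longrightarrow> q \<in> S1 \<times> S2 \<Longrightarrow> r \<in> S1 \<times> S2 \<Longrightarrow>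
      prod_le le1 le2 p q \<Longrightarrow> prod_le le1 le2 q r \<Longrightarrow> prod_le le1 le2 p r" for p q r
    unfolding prod_le_def mem_Times_iff by (meson assms P)
  ultimately show ?thesis unfolding poset_on_def by blast
qed

lemma chain_on_subset: "chain_on S le C \<Longrightarrow> C' \<subseteq> C \<Longrightarrow> chain_on S le C'"
  unfolding chain_on_def by blast

lemma chain_on_mono: "chain_on S le C \<Longrightarrow> S \<subseteq> S' \<Longrightarrow> chain_on S' le C"
  unfolding chain_on_def by blast

lemma chain_on_converse: "chain_on S (\<lambda>a b. le b a) C \<longleftrightarrow> chain_on S le C"
  unfolding chain_on_def by blast

lemma plength_converse: "plength S (\<lambda>a b. le b a) = plength S le"
proof -
  have "{C. chain_on S (\<lambda>a b. le b a) C \<and> finite C} = {C. chain_on S le C \<and> finite C}"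
    using chain_on_converse by blast
  then show ?thesis unfolding plength_def by simp
qed

lemma finite_length_converse: "finite_length S (\<lambda>a b. le b a) \<longleftrightarrow> finite_length S le"
  unfolding finite_length_def using chain_on_converse by blast

lemma poset_iso_refl: "poset_iso S le S le"
  unfolding poset_iso_def by (intro exI[of _ id]) simp

lemma finite_length_subset: "finite_length S le \<Longrightarrow> A \<subseteq> S \<Longrightarrow> finite_length A le"
  unfolding finite_length_def by (meson chain_on_mono)

lemma card_chain_le_plength:
  assumes "finite_length S le" "chain_on S le C"
  shows "card C \<le> Suc (plength S le)"
proof -
  obtain n where n: "\<And>C. chain_on S le C \<Longrightarrow> finite C \<and> card C \<le> n"
    using assms(1) unfolding finite_length_def by blast
  have "bdd_above ((\<lambda>C. card C - 1) ` {C. chain_on S le C \<and> finite C})"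
    by (rule bdd_aboveI[of _ n]) (use n in force)
  then have "card C - 1 \<le> plength S le"
    unfolding plength_def by (rule cSUP_upper[rotated]) (use n assms(2) in blast)
  then show ?thesis by linarith
qed

lemma obtain_longest_chain:
  assumes "poset_on S le" "finite_length S le" "S \<noteq> {}"
  obtains C where "chain_on S le C" "finite C" "card C = Suc (plength S le)"
proof -
  obtain n where n: "\<And>C. chain_on S le C \<Longrightarrow> finite C \<and> card C \<le> n"
    using assms(2) unfolding finite_length_def by blast
  let ?lengths = "(\<lambda>C. card C - 1) ` {C. chain_on S le C \<and> finite C}"
  have "?lengths \<subseteq> {..n}"
    using n by (force simp: le_diff_conv)
  then have fin: "finite ?lengths"
    using finite_subset by blast
  have "chain_on S le {}"
    unfolding chain_on_def by simp
  then have ne: "?lengths \<noteq> {}"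
    by blast
  have "Sup ?lengths \<in> ?lengths"
    unfolding cSup_eq_Max[OF fin ne] by (rule Max_in[OF fin ne])
  then obtain C where C: "chain_on S le C" "finite C" "plength S le = card C - 1"
    unfolding plength_def by auto
  show ?thesis
  proof (cases "C = {}")
    case True
    obtain s where "s \<in> S" using assms(3) by blast
    then have "chain_on S le {s}"
      using poset_on_refl[OF assms(1)] unfolding chain_on_def by simp
    with that C True show ?thesis by simp
  next
    case False
    with that C show ?thesis by (simp add: card_gt_0_iff)
  qed
qed

lemma maximal_chain_on_memI:
  assumes "maximal_chain_on S le C" "x \<in> S" "le x x" "\<forall>c\<in>C. le x c \<or> le c x"
  shows "x \<in> C"
proof -
  have "chain_on S le (insert x C)"
    using assms unfolding maximal_chain_on_def chain_on_def by auto
  then show ?thesis using assms(1) unfolding maximal_chain_on_def by blast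
qed

lemma maximal_chain_on_if_longest:
  assumes "finite_length S le" "chain_on S le C" "card C = Suc (plength S le)"
  shows "maximal_chain_on S le C"
  unfolding maximal_chain_on_def
proof (intro conjI allI impI assms(2))
  fix D assume D: "chain_on S le D \<and> C \<subseteq> D"
  then have "finite D" "card D \<le> card C"
    using card_chain_le_plength[OF assms(1)] assms(3) finite_length_def assms(1) by metis+
  then show "D = C" using D card_seteq by blast
qed

lemma maximal_chain_extends:
  assumes "finite_length S le" "chain_on S le C"
  obtains D where "maximal_chain_on S le D" "C \<subseteq> D"
proof -
  obtain n where n: "\<And>C. chain_on S le C \<Longrightarrow> finite C \<and> card C \<le> n"
    using assms(1) unfolding finite_length_def by blast
  obtain D where D: "chain_on S le D \<and> C \<subseteq> D"
    and longest: "\<And>D'. chain_on S le D' \<and> C \<subseteq> D' \<Longrightarrow> card D' \<le> card D"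
    using ex_has_greatest_nat[of "\<lambda>D. chain_on S le D \<and> C \<subseteq> D" C card "Suc n"] assms(2) n
    by (metis le_imp_less_Suc order_refl)
  have "maximal_chain_on S le D"
    unfolding maximal_chain_on_def
  proof (intro conjI allI impI)
    fix D' assume "chain_on S le D' \<and> D \<subseteq> D'"
    then show "D' = D" using D longest[of D'] n card_seteq by (metis order_trans)
  qed (use D in blast)
  with that D show ?thesis by blast
qed

lemma finite_chain_has_greatest:
  assumes "poset_on S le" "chain_on S le C" "finite C" "C \<noteq> {}"
  obtains m where "m \<in> C" "\<forall>c\<in>C. le c m"
proof -
  have "\<exists>m\<in>C. \<forall>c\<in>C. le c m"
    using assms(3,4,2)
  proof (induction C rule: finite_ne_induct)
    case (singleton x)
    then show ?case unfolding chain_on_def by blast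
  next
    case (insert x F)
    obtain m where m: "m \<in> F" "\<forall>c\<in>F. le c m"
      using insert.IH chain_on_subset[OF insert.prems] by blast
    have S: "x \<in> S" "m \<in> S" "F \<subseteq> S"
      using insert.prems m(1) unfolding chain_on_def by auto
    have "le m x \<or> le x m" "le x x"
      using insert.prems m(1) unfolding chain_on_def by auto
    then show ?case
    proof (elim disjE)
      assume "le m x"
      then have "\<forall>c\<in>F. le c x"
        using m S poset_on_trans[OF assms(1)] by blast
      with \<open>le x x\<close> show ?case by blast
    next
      assume "le x m"
      with m show ?case by blast
    qed
  qed
  with that show ?thesis by blast
qed

lemma finite_chain_induct [consumes 3, case_names empty insert]:
  assumes "poset_on S le" "chain_on S le C" "finite C"
    and "P {}"
    and "\<And>m F. chain_on S le (insert m F) \<Longrightarrow> finite F \<Longrightarrow> m \<notin> F \<Longrightarrow>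
      (\<And>c. c \<in> F \<Longrightarrow> le c m) \<Longrightarrow> P F \<Longrightarrow> P (insert m F)"
  shows "P C"
  using assms(2,3)
proof (induction "card C" arbitrary: C)
  case 0
  then show ?case using assms(4) by simp
next
  case (Suc k)
  then obtain m where m: "m \<in> C" "\<forall>c\<in>C. le c m"
    using finite_chain_has_greatest[OF assms(1)] by (metis card.empty nat.distinct(1))
  have "P (C - {m})"
    using Suc m(1) chain_on_subset[of S le C "C - {m}"] by simp
  moreover have "chain_on S le (insert m (C - {m}))"
    using Suc.prems(1) m(1) by (simp add: insert_absorb)
  ultimately have "P (insert m (C - {m}))"
    using assms(5)[of m "C - {m}"] Suc.prems(2) m by simp
  then show ?case using m(1) by (simp add: insert_absorb)
qed

lemma card_maximal_chain_graded:
  assumes "graded S le" "finite_length S le" "maximal_chain_on S le C"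
  shows "card C = Suc (plength S le)"
proof -
  have "poset_on S le" "S \<noteq> {}"
    using assms(1) unfolding graded_def bounded_poset_def by auto
  then obtain L where L: "chain_on S le L" "finite L" "card L = Suc (plength S le)"
    using obtain_longest_chain assms(2) by blast
  then have "maximal_chain_on S le L"
    using assms(2) by (intro maximal_chain_on_if_longest)
  with assms(1,3) L(3) show ?thesis unfolding graded_def by metis
qed

lemma maximal_chain_on_Un_below_above:
  assumes "poset_on S le" "y \<in> S"
    and C1: "maximal_chain_on {z \<in> S. le z y} le C1"
    and C2: "maximal_chain_on {z \<in> S. le y z} le C2"
  shows "maximal_chain_on S le (C1 \<union> C2)"
proof -
  have ch: "chain_on {z \<in> S. le z y} le C1" "chain_on {z \<in> S. le y z} le C2"
    using C1 C2 unfolding maximal_chain_on_def by blast+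
  then have sub: "C1 \<subseteq> {z \<in> S. le z y}" "C2 \<subseteq> {z \<in> S. le y z}"
    unfolding chain_on_def by blast+
  have "le a b \<or> le b a" if "a \<in> C1 \<union> C2" "b \<in> C1 \<union> C2" for a b
  proof -
    have "le a b" if "a \<in> C1" "b \<in> C2" for a b
      using that sub poset_on_trans[OF assms(1), of a y b] assms(2) by blast
    then show ?thesis
      using that ch unfolding chain_on_def by blast
  qed
  then have chain: "chain_on S le (C1 \<union> C2)"
    using sub unfolding chain_on_def by blast
  have "le y y"
    using assms(1,2) by (rule poset_on_refl)
  then have "y \<in> C1"
    using sub(1) assms(2) by (intro maximal_chain_on_memI[OF C1]) auto
  show ?thesis
    unfolding maximal_chain_on_def
  proof (intro conjI allI impI chain)
    fix D assume D: "chain_on S le D \<and> C1 \<union> C2 \<subseteq> D"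
    have "z \<in> C1 \<union> C2" if "z \<in> D" for z
    proof -
      have z: "z \<in> S" "\<forall>c\<in>C1 \<union> C2. le z c \<or> le c z"
        using D that unfolding chain_on_def by auto
      have "le z z"
        using assms(1) z(1) by (rule poset_on_refl)
      have "le z y \<or> le y z"
        using z(2) \<open>y \<in> C1\<close> by blast
      then show ?thesis
        using z \<open>le z z\<close> maximal_chain_on_memI[OF C1, of z] maximal_chain_on_memI[OF C2, of z] by auto
    qed
    then show "D = C1 \<union> C2" using D by blast
  qed
qed

lemma plength_up_set_add_prank:
  assumes "graded S le" "finite_length S le" "y \<in> S"
  shows "plength {z \<in> S. le y z} le + prank S le y = plength S le"
proof -
  let ?A = "{z \<in> S. le z y}" and ?U = "{z \<in> S. le y z}"
  have P: "poset_on S le"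
    using assms(1) unfolding graded_def bounded_poset_def by blast
  have "le y y"
    using P assms(3) by (rule poset_on_refl)
  then have y: "y \<in> ?A" "y \<in> ?U"
    using assms(3) by blast+
  have PA: "poset_on ?A le" and PU: "poset_on ?U le"
    using P by (rule poset_on_subset; blast)+
  have flA: "finite_length ?A le" and flU: "finite_length ?U le"
    using assms(2) by (rule finite_length_subset; blast)+
  obtain C1 where C1: "chain_on ?A le C1" "finite C1" "card C1 = Suc (plength ?A le)"
    using obtain_longest_chain[OF PA flA] y(1) by blast
  obtain C2 where C2: "chain_on ?U le C2" "finite C2" "card C2 = Suc (plength ?U le)"
    using obtain_longest_chain[OF PU flU] y(2) by blast
  have max1: "maximal_chain_on ?A le C1"
    using flA C1(1,3) by (rule maximal_chain_on_if_longest)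
  have max2: "maximal_chain_on ?U le C2"
    using flU C2(1,3) by (rule maximal_chain_on_if_longest)
  have "y \<in> C1"
    using C1(1) y(1) \<open>le y y\<close> unfolding chain_on_def by (intro maximal_chain_on_memI[OF max1]) auto
  moreover have "y \<in> C2"
    using C2(1) y(2) \<open>le y y\<close> unfolding chain_on_def by (intro maximal_chain_on_memI[OF max2]) auto
  ultimately have "C1 \<inter> C2 = {y}"
    using C1(1) C2(1) assms(3) poset_on_antisym[OF P] unfolding chain_on_def by blast
  then have "card C1 + card C2 = Suc (card (C1 \<union> C2))"
    using card_Un_Int[OF C1(2) C2(2)] by simp
  moreover have "card (C1 \<union> C2) = Suc (plength S le)"
    using card_maximal_chain_graded[OF assms(1,2) maximal_chain_on_Un_below_above[OF P assms(3) max1 max2]] .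
  ultimately show ?thesis
    using C1(3) C2(3) unfolding prank_def by simp
qed

lemma plength_image:
  assumes inj: "inj_on f S" and le': "\<And>a b. a \<in> S \<Longrightarrow> b \<in> S \<Longrightarrow> le' (f a) (f b) \<longleftrightarrow> le a b"
  shows "plength (f ` S) le' = plength S le"
proof -
  have chains: "{C'. chain_on (f ` S) le' C' \<and> finite C'} = (`) f ` {C. chain_on S le C \<and> finite C}"
  proof (intro set_eqI iffI)
    fix C' assume C': "C' \<in> {C'. chain_on (f ` S) le' C' \<and> finite C'}"
    let ?C = "f -` C' \<inter> S"
    have "C' = f ` ?C"
      using C' unfolding chain_on_def by blast
    moreover have "finite ?C"
      using C' inj by (blast intro: finite_vimage_IntI)
    moreover have "chain_on S le ?C"
      unfolding chain_on_def
    proof (intro conjI ballI)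
      fix a b assume ab: "a \<in> ?C" "b \<in> ?C"
      then have "le' (f a) (f b) \<or> le' (f b) (f a)"
        using C' unfolding chain_on_def by blast
      then show "le a b \<or> le b a"
        using le' ab by blast
    qed blast
    ultimately show "C' \<in> (`) f ` {C. chain_on S le C \<and> finite C}" by blast
  next
    fix C' assume "C' \<in> (`) f ` {C. chain_on S le C \<and> finite C}"
    then obtain C where "C' = f ` C" "chain_on S le C" "finite C"
      by blast
    then show "C' \<in> {C'. chain_on (f ` S) le' C' \<and> finite C'}"
      using le' unfolding chain_on_def by (simp add: image_mono) blast
  qed
  have "card (f ` C) = card C" if "chain_on S le C" for C
    using that inj unfolding chain_on_def by (meson card_image inj_on_subset)
  then show ?thesis
    unfolding plength_def chains image_image by (intro SUP_cong) simp_all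
qed

section \<open>Chains in products\<close>

definition covers_on :: "'a set \<Rightarrow> ('a \<Rightarrow> 'a \<Rightarrow> bool) \<Rightarrow> 'a \<Rightarrow> 'a \<Rightarrow> bool" where
  "covers_on C le p q \<longleftrightarrow>
     p \<in> C \<and> q \<in> C \<and> p \<noteq> q \<and> le p q \<and> (\<forall>z\<in>C. le p z \<and> le z q \<longrightarrow> z = p \<or> z = q)"

lemma chain_on_prod_fst_snd:
  assumes "chain_on (S1 \<times> S2) (prod_le le1 le2) E"
  shows "chain_on S1 le1 (fst ` E)" "chain_on S2 le2 (snd ` E)"
  using assms unfolding chain_on_def prod_le_def by fastforce+

lemma finite_length_prod:
  assumes "finite_length S1 le1" "finite_length S2 le2"
  shows "finite_length (S1 \<times> S2) (prod_le le1 le2)"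
proof -
  obtain n1 n2 where
    n1: "\<And>C. chain_on S1 le1 C \<Longrightarrow> finite C \<and> card C \<le> n1" and
    n2: "\<And>C. chain_on S2 le2 C \<Longrightarrow> finite C \<and> card C \<le> n2"
    using assms unfolding finite_length_def by metis
  have "finite E \<and> card E \<le> n1 * n2" if E: "chain_on (S1 \<times> S2) (prod_le le1 le2) E" for E
  proof -
    have "finite (fst ` E \<times> snd ` E)" and "card (fst ` E \<times> snd ` E) \<le> n1 * n2"
      using n1 n2 chain_on_prod_fst_snd[OF E] by (auto simp: card_cartesian_product mult_le_mono)
    moreover have "E \<subseteq> fst ` E \<times> snd ` E"
      by force
    ultimately show ?thesis
      using card_mono finite_subset le_trans by metis
  qed
  then show ?thesis
    unfolding finite_length_def by blast
qed

lemma maximal_chain_covers_fix_coordinate: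
  assumes P1: "poset_on S1 le1" and P2: "poset_on S2 le2" and T: "T \<subseteq> S1 \<times> S2"
    and mix: "\<And>p q. p \<in> T \<Longrightarrow> q \<in> T \<Longrightarrow> prod_le le1 le2 p q \<Longrightarrow> (fst q, snd p) \<in> T"
    and E: "maximal_chain_on T (prod_le le1 le2) E"
    and pq: "covers_on E (prod_le le1 le2) p q"
  shows "fst p = fst q \<or> snd p = snd q"
proof -
  let ?R = "prod_le le1 le2" and ?z = "(fst q, snd p)"
  have P: "poset_on T ?R"
    using poset_on_subset[OF poset_on_prod[OF P1 P2] T] .
  have chain: "chain_on T ?R E"
    using E unfolding maximal_chain_on_def by blast
  have p: "p \<in> E" "q \<in> E" "?R p q"
    and between: "\<And>e. e \<in> E \<Longrightarrow> ?R p e \<Longrightarrow> ?R e q \<Longrightarrow> e = p \<or> e = q"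
    using pq unfolding covers_on_def by auto
  have ET: "E \<subseteq> T"
    using chain unfolding chain_on_def by blast
  \<comment> \<open>The pair (fst q, snd p) lies between p and q and is comparable with every element of E.\<close>
  have z: "?z \<in> T"
    using mix p ET by blast
  have "?R p ?z" "?R ?z q"
    using p ET T z poset_on_refl[OF P1] poset_on_refl[OF P2] unfolding prod_le_def by auto
  have "?R e ?z \<or> ?R ?z e" if e: "e \<in> E" for e
  proof -
    have "(?R e p \<or> ?R p e) \<and> (?R e q \<or> ?R q e)"
      using chain e p unfolding chain_on_def by blast
    then consider "?R e p" | "?R q e" | "?R p e" "?R e q"
      by blast
    then show ?thesis
    proof cases
      case 1
      then show ?thesis
        using poset_on_trans[OF P, of e p ?z] \<open>?R p ?z\<close> e p z ET by blast
    next
      case 2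
      then show ?thesis
        using poset_on_trans[OF P, of ?z q e] \<open>?R ?z q\<close> e p z ET by blast
    next
      case 3
      then show ?thesis
        using between e \<open>?R p ?z\<close> \<open>?R ?z q\<close> by blast
    qed
  qed
  then have "?z \<in> E"
    using z poset_on_refl[OF P z] by (intro maximal_chain_on_memI[OF E]) auto
  then have "?z = p \<or> ?z = q"
    using between \<open>?R p ?z\<close> \<open>?R ?z q\<close> by blast
  then show ?thesis
    by (metis fst_conv snd_conv)
qed

lemma greatest_of_prod_chain_new_coordinate:
  assumes P1: "poset_on S1 le1" and P2: "poset_on S2 le2"
    and chain: "chain_on (S1 \<times> S2) (prod_le le1 le2) (insert m F)"
    and m: "m \<notin> F" "\<forall>c\<in>F. prod_le le1 le2 c m"
  shows "fst m \<notin> fst ` F \<or> snd m \<notin> snd ` F"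
proof (rule ccontr)
  let ?R = "prod_le le1 le2"
  assume "\<not> ?thesis"
  then obtain q1 q2 where q: "q1 \<in> F" "q2 \<in> F" "fst q1 = fst m" "snd q2 = snd m"
    by force
  have S: "insert m F \<subseteq> S1 \<times> S2"
    using chain unfolding chain_on_def by blast
  have "le1 (fst m) (fst m)" "le2 (snd m) (snd m)"
    using S poset_on_refl[OF P1] poset_on_refl[OF P2] by auto
  moreover have "?R q1 q2 \<or> ?R q2 q1"
    using chain q unfolding chain_on_def by blast
  ultimately have "?R m q2 \<or> ?R m q1"
    using q unfolding prod_le_def by auto
  then have "q2 = m \<or> q1 = m"
    using m(2) q S poset_on_antisym[OF poset_on_prod[OF P1 P2]] by blast
  then show False
    using m(1) q by blast
qed

lemma covers_on_insert_greatest: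
  assumes P: "poset_on S le" and S: "insert m F \<subseteq> S" and m: "m \<notin> F" "\<forall>c\<in>F. le c m"
  shows "covers_on F le p q \<Longrightarrow> covers_on (insert m F) le p q"
    and "p \<in> F \<Longrightarrow> \<forall>c\<in>F. le c p \<Longrightarrow> covers_on (insert m F) le p m"
proof -
  have m_greatest: "e = m" if "e \<in> insert m F" "le m e" for e
    using that m(2) poset_on_antisym[OF P, of e m] S by blast
  show "covers_on F le p q \<Longrightarrow> covers_on (insert m F) le p q"
    using m_greatest m(1) unfolding covers_on_def by blast
  show "p \<in> F \<Longrightarrow> \<forall>c\<in>F. le c p \<Longrightarrow> covers_on (insert m F) le p m"
    using m_greatest m poset_on_antisym[OF P] S unfolding covers_on_def by blast
qed

lemma card_fst_snd_saturated_chain: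
  assumes P1: "poset_on S1 le1" and P2: "poset_on S2 le2"
    and E: "chain_on (S1 \<times> S2) (prod_le le1 le2) E" "finite E" "E \<noteq> {}"
    and saturated: "\<And>p q. covers_on E (prod_le le1 le2) p q \<Longrightarrow> fst p = fst q \<or> snd p = snd q"
  shows "card (fst ` E) + card (snd ` E) = Suc (card E)"
proof -
  let ?R = "prod_le le1 le2"
  have P: "poset_on (S1 \<times> S2) ?R"
    using P1 P2 by (rule poset_on_prod)
  have "E \<noteq> {} \<longrightarrow> (\<forall>p q. covers_on E ?R p q \<longrightarrow> fst p = fst q \<or> snd p = snd q) \<longrightarrow>
      card (fst ` E) + card (snd ` E) = Suc (card E)"
    using P E(1,2)
  proof (induction rule: finite_chain_induct)
    case (insert m F)
    \<comment> \<open>The greatest element m brings exactly one new coordinate: at least one because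
      the chain is antisymmetric, at most one because m covers the greatest element of F.\<close>
    show ?case
    proof (intro impI)
      assume sat: "\<forall>p q. covers_on (insert m F) ?R p q \<longrightarrow> fst p = fst q \<or> snd p = snd q"
      have S: "insert m F \<subseteq> S1 \<times> S2"
        using insert.hyps(1) unfolding chain_on_def by blast
      note covers = covers_on_insert_greatest[OF P S insert.hyps(3)] insert.hyps(4)
      show "card (fst ` insert m F) + card (snd ` insert m F) = Suc (card (insert m F))"
      proof (cases "F = {}")
        case False
        then have IH: "card (fst ` F) + card (snd ` F) = Suc (card F)"
          using insert.IH sat covers by blast
        obtain p where "p \<in> F" "\<forall>c\<in>F. ?R c p"
          using finite_chain_has_greatest[OF P chain_on_subset[OF insert.hyps(1)] insert.hyps(2) False]
          by blast
        then have old: "fst m \<in> fst ` F \<or> snd m \<in> snd ` F"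
          using sat covers by (metis image_eqI)
        have new: "fst m \<notin> fst ` F \<or> snd m \<notin> snd ` F"
          using P1 P2 insert.hyps(1,3) insert.hyps(4) by (intro greatest_of_prod_chain_new_coordinate) auto
        show ?thesis
          using IH old new insert.hyps(2,3) by (auto simp: card_insert_if)
      qed simp
    qed
  qed simp
  then show ?thesis
    using E(3) saturated by blast
qed

lemma plength_prod_le:
  assumes P1: "poset_on S1 le1" and P2: "poset_on S2 le2"
    and fl1: "finite_length S1 le1" and fl2: "finite_length S2 le2"
    and ne: "S1 \<noteq> {}" "S2 \<noteq> {}"
  shows "plength (S1 \<times> S2) (prod_le le1 le2) \<le> plength S1 le1 + plength S2 le2"
proof -
  let ?R = "prod_le le1 le2"
  have P: "poset_on (S1 \<times> S2) ?R"
    using P1 P2 by (rule poset_on_prod)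
  have fl: "finite_length (S1 \<times> S2) ?R"
    using fl1 fl2 by (rule finite_length_prod)
  have "S1 \<times> S2 \<noteq> {}"
    using ne by simp
  with P fl obtain E where E: "chain_on (S1 \<times> S2) ?R E" "finite E" "card E = Suc (plength (S1 \<times> S2) ?R)"
    by (rule obtain_longest_chain)
  then have "E \<noteq> {}"
    by auto
  have max: "maximal_chain_on (S1 \<times> S2) ?R E"
    using fl E(1,3) by (rule maximal_chain_on_if_longest)
  have "fst p = fst q \<or> snd p = snd q" if "covers_on E ?R p q" for p q
    using P1 P2 order_refl _ max that by (rule maximal_chain_covers_fix_coordinate) auto
  with P1 P2 E(1,2) \<open>E \<noteq> {}\<close> have "card (fst ` E) + card (snd ` E) = Suc (card E)"
    by (rule card_fst_snd_saturated_chain)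
  moreover have "card (fst ` E) \<le> Suc (plength S1 le1)"
    using fl1 chain_on_prod_fst_snd(1)[OF E(1)] by (rule card_chain_le_plength)
  moreover have "card (snd ` E) \<le> Suc (plength S2 le2)"
    using fl2 chain_on_prod_fst_snd(2)[OF E(1)] by (rule card_chain_le_plength)
  ultimately show "plength (S1 \<times> S2) ?R \<le> plength S1 le1 + plength S2 le2"
    using E(3) by linarith
qed

lemma plength_prod_ge:
  assumes P1: "poset_on S1 le1" and P2: "poset_on S2 le2"
    and fl1: "finite_length S1 le1" and fl2: "finite_length S2 le2"
    and ne: "S1 \<noteq> {}" "S2 \<noteq> {}"
  shows "plength S1 le1 + plength S2 le2 \<le> plength (S1 \<times> S2) (prod_le le1 le2)"
proof -
  let ?R = "prod_le le1 le2"
  obtain C1 where C1: "chain_on S1 le1 C1" "finite C1" "card C1 = Suc (plength S1 le1)"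
    using P1 fl1 ne(1) by (rule obtain_longest_chain)
  obtain C2 where C2: "chain_on S2 le2 C2" "finite C2" "card C2 = Suc (plength S2 le2)"
    using P2 fl2 ne(2) by (rule obtain_longest_chain)
  have "C1 \<noteq> {}" "C2 \<noteq> {}"
    using C1(3) C2(3) by auto
  obtain g1 where g1: "g1 \<in> C1" "\<forall>c\<in>C1. le1 c g1"
    using P1 C1(1,2) \<open>C1 \<noteq> {}\<close> by (rule finite_chain_has_greatest)
  have "chain_on S2 (\<lambda>a b. le2 b a) C2"
    using C2(1) chain_on_converse by blast
  obtain l2 where l2: "l2 \<in> C2" "\<forall>c\<in>C2. le2 l2 c"
    using poset_on_converse[OF P2] \<open>chain_on S2 (\<lambda>a b. le2 b a) C2\<close> C2(2) \<open>C2 \<noteq> {}\<close>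
    by (rule finite_chain_has_greatest)
  let ?E1 = "(\<lambda>a. (a, l2)) ` C1" and ?E2 = "Pair g1 ` C2"
  have S: "C1 \<subseteq> S1" "C2 \<subseteq> S2" and tot1: "\<forall>a\<in>C1. \<forall>b\<in>C1. le1 a b \<or> le1 b a"
    and tot2: "\<forall>a\<in>C2. \<forall>b\<in>C2. le2 a b \<or> le2 b a"
    using C1(1) C2(1) unfolding chain_on_def by blast+
  have refl: "le1 g1 g1" "le2 l2 l2"
    using S g1(1) l2(1) poset_on_refl[OF P1] poset_on_refl[OF P2] by blast+
  have "?R (a, l2) (a', l2) \<or> ?R (a', l2) (a, l2)" if "a \<in> C1" "a' \<in> C1" for a a'
    using that tot1 refl unfolding prod_le_def by simp
  moreover have "?R (a, l2) (g1, b)" if "a \<in> C1" "b \<in> C2" for a b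
    using that g1 l2 unfolding prod_le_def by simp
  moreover have "?R (g1, b) (g1, b') \<or> ?R (g1, b') (g1, b)" if "b \<in> C2" "b' \<in> C2" for b b'
    using that tot2 refl unfolding prod_le_def by simp
  ultimately have "?R p q \<or> ?R q p" if "p \<in> ?E1 \<union> ?E2" "q \<in> ?E1 \<union> ?E2" for p q
    using that by blast
  then have "chain_on (S1 \<times> S2) ?R (?E1 \<union> ?E2)"
    using S g1(1) l2(1) unfolding chain_on_def by blast
  then have "card (?E1 \<union> ?E2) \<le> Suc (plength (S1 \<times> S2) ?R)"
    using card_chain_le_plength[OF finite_length_prod[OF fl1 fl2]] by blast
  moreover have "?E1 \<inter> ?E2 = {(g1, l2)}"
    using g1(1) l2(1) by auto
  then have "card ?E1 + card ?E2 = Suc (card (?E1 \<union> ?E2))"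
    using card_Un_Int[of ?E1 ?E2] C1(2) C2(2) by simp
  moreover have "card ?E1 = card C1" "card ?E2 = card C2"
    by (simp_all add: card_image inj_on_def)
  ultimately show "plength S1 le1 + plength S2 le2 \<le> plength (S1 \<times> S2) ?R"
    using C1(3) C2(3) by linarith
qed

lemma plength_prod:
  assumes "poset_on S1 le1" "poset_on S2 le2" "finite_length S1 le1" "finite_length S2 le2"
    and "S1 \<noteq> {}" "S2 \<noteq> {}"
  shows "plength (S1 \<times> S2) (prod_le le1 le2) = plength S1 le1 + plength S2 le2"
  using plength_prod_le[OF assms] plength_prod_ge[OF assms] by (rule antisym)

section \<open>The Bier poset\<close>

locale bounded_poset_ideal =
  fixes S :: "'a set" and le :: "'a \<Rightarrow> 'a \<Rightarrow> bool" and I :: "'a set" and hat0 hat1 :: 'a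
  assumes poset: "poset_on S le"
    and hat0: "hat0 \<in> S" "\<And>z. z \<in> S \<Longrightarrow> le hat0 z"
    and hat1: "hat1 \<in> S" "\<And>z. z \<in> S \<Longrightarrow> le z hat1"
    and ideal: "proper_ideal S le I"
begin

abbreviation B where "B \<equiv> bier_carrier S le I"
abbreviation le_pair where "le_pair \<equiv> prod_le le (\<lambda>a b. le b a)"

definition bier_pairs :: "('a \<times> 'a) set" where
  "bier_pairs = {(x, y). x \<in> I \<and> y \<in> S - I \<and> le x y}"

lemma le_refl_on: "x \<in> S \<Longrightarrow> le x x"
  using poset by (rule poset_on_refl)

lemma le_trans_on: "x \<in> S \<Longrightarrow> y \<in> S \<Longrightarrow> z \<in> S \<Longrightarrow> le x y \<Longrightarrow> le y z \<Longrightarrow> le x z"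
  using poset by (rule poset_on_trans)

lemma ideal_subset: "I \<subseteq> S"
  using ideal unfolding proper_ideal_def by blast

lemma ideal_down: "x \<in> S \<Longrightarrow> y \<in> I \<Longrightarrow> le x y \<Longrightarrow> x \<in> I"
  using ideal unfolding proper_ideal_def by blast

lemma hat0_in_ideal: "hat0 \<in> I"
  using ideal ideal_down hat0 ideal_subset unfolding proper_ideal_def by blast

lemma hat1_notin_ideal: "hat1 \<notin> I"
  using ideal ideal_down hat1 unfolding proper_ideal_def by blast

lemma mem_bier_pairs [simp]: "(x, y) \<in> bier_pairs \<longleftrightarrow> x \<in> I \<and> y \<in> S \<and> y \<notin> I \<and> le x y"
  unfolding bier_pairs_def by blast

lemma bier_pairsD:
  assumes "p \<in> bier_pairs"
  shows "fst p \<in> I" "fst p \<in> S" "snd p \<in> S" "snd p \<notin> I" "le (fst p) (snd p)"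
  using assms ideal_subset unfolding bier_pairs_def by auto

lemma bier_pairs_subset: "bier_pairs \<subseteq> S \<times> S"
  using ideal_subset unfolding bier_pairs_def by blast

lemma bier_carrier_eq: "B = insert None (Some ` bier_pairs)"
  unfolding bier_carrier_def bier_pairs_def by blast

lemma Some_in_bier_carrier [simp]: "Some p \<in> B \<longleftrightarrow> p \<in> bier_pairs"
  unfolding bier_carrier_eq by blast

lemma None_in_bier_carrier [simp]: "None \<in> B"
  unfolding bier_carrier_eq by blast

lemma bier_le_Some [simp]: "bier_le le (Some p) (Some q) \<longleftrightarrow> le_pair p q"
  by (cases p; cases q) (simp add: prod_le_def)

lemma bier_le_None_left [simp]: "bier_le le None z \<longleftrightarrow> z = None"
  by (cases z) auto

lemma bounded_poset_S: "bounded_poset S le"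
  unfolding bounded_poset_def using poset hat0 hat1 by blast

lemma bier_pairs_mix:
  assumes "p \<in> bier_pairs" "q \<in> bier_pairs" "le_pair p q"
  shows "(fst q, snd p) \<in> bier_pairs"
proof -
  obtain a b c d where pq: "p = (a, b)" "q = (c, d)"
    by fastforce
  have "le c b"
    using assms ideal_subset le_trans_on[of c d b] unfolding pq prod_le_def by auto
  then show ?thesis
    using assms unfolding pq by simp
qed

lemma bottom_pair: "(hat0, hat1) \<in> bier_pairs" "\<And>p. p \<in> bier_pairs \<Longrightarrow> le_pair (hat0, hat1) p"
  using hat0 hat1 hat0_in_ideal hat1_notin_ideal ideal_subset
  unfolding bier_pairs_def prod_le_def by auto

lemma bier_bottom: "z \<in> B \<Longrightarrow> bier_le le (Some (hat0, hat1)) z"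
  using bottom_pair(2) by (cases z) auto

lemma poset_bier_pairs: "poset_on bier_pairs le_pair"
  using poset_on_subset[OF poset_on_prod[OF poset poset_on_converse[OF poset]] bier_pairs_subset] .

lemma poset_bier: "poset_on B (bier_le le)"
proof -
  note P = poset_on_refl[OF poset_bier_pairs] poset_on_antisym[OF poset_bier_pairs]
    poset_on_trans[OF poset_bier_pairs]
  have "bier_le le a a" if "a \<in> B" for a
    using that P(1) by (cases a) auto
  moreover have "a = b" if "a \<in> B" "b \<in> B" "bier_le le a b" "bier_le le b a" for a b
  proof (cases a; cases b)
    fix p q assume "a = Some p" "b = Some q"
    then show "a = b" using that P(2)[of p q] by simp
  qed (use that in auto)
  moreover have "bier_le le a c"
    if abc: "a \<in> B" "b \<in> B" "c \<in> B" "bier_le le a b" "bier_le le b c" for a b c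
  proof (cases c)
    case (Some r)
    then obtain p q where "a = Some p" "b = Some q"
      by (cases a; cases b) (use abc in auto)
    then show ?thesis
      using abc Some P(3)[of p q r] by simp
  qed simp
  ultimately show ?thesis
    unfolding poset_on_def by blast
qed

lemma bounded_bier: "bounded_poset B (bier_le le)"
proof -
  have "Some (hat0, hat1) \<in> B" "\<forall>z\<in>B. bier_le le (Some (hat0, hat1)) z"
    using bottom_pair(1) bier_bottom by auto
  moreover have "None \<in> B" "\<forall>z\<in>B. bier_le le z None"
    by simp_all
  ultimately show ?thesis
    unfolding bounded_poset_def using poset_bier by blast
qed

lemma interval_bier_top:
  assumes "Some (x, y) \<in> B"
  shows "interval B (bier_le le) (Some (x, y)) None = bier_carrier (interval S le x y) le (I \<inter> interval S le x y)"
proof -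
  have xy: "x \<in> S" "y \<in> S"
    using assms ideal_subset by auto
  have Some_iff: "Some (a, b) \<in> interval B (bier_le le) (Some (x, y)) None \<longleftrightarrow>
      Some (a, b) \<in> bier_carrier (interval S le x y) le (I \<inter> interval S le x y)" for a b
    using xy ideal_subset le_trans_on[of a b y] le_trans_on[of x a b]
    unfolding interval_def bier_carrier_def by (auto simp: prod_le_def)
  show ?thesis
  proof (rule set_eqI)
    fix z
    show "z \<in> interval B (bier_le le) (Some (x, y)) None \<longleftrightarrow>
      z \<in> bier_carrier (interval S le x y) le (I \<inter> interval S le x y)"
    proof (cases z)
      case None
      then show ?thesis
        using assms unfolding interval_def bier_carrier_def by simp
    next
      case (Some p)
      then show ?thesis
        using Some_iff[of "fst p" "snd p"] by simp
    qed
  qed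
qed

lemma interval_bier_Some:
  assumes "Some (x', y') \<in> B" "Some (x, y) \<in> B" "le x' x" "le y y'"
  shows "interval B (bier_le le) (Some (x', y')) (Some (x, y)) = Some ` (interval S le x' x \<times> interval S le y y')"
proof -
  have S: "x' \<in> S" "x \<in> S" "y \<in> S" "y' \<in> S" "x \<in> I" "y \<notin> I" "le x y"
    using assms ideal_subset by auto
  have "(a, b) \<in> bier_pairs \<and> le x' a \<and> le a x \<and> le y b \<and> le b y' \<longleftrightarrow>
      (a, b) \<in> interval S le x' x \<times> interval S le y y'" for a b
  proof
    assume "(a, b) \<in> bier_pairs \<and> le x' a \<and> le a x \<and> le y b \<and> le b y'"
    then show "(a, b) \<in> interval S le x' x \<times> interval S le y y'"
      using ideal_subset unfolding interval_def by auto
  next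
    assume "(a, b) \<in> interval S le x' x \<times> interval S le y y'"
    then have ab: "a \<in> S" "b \<in> S" "le x' a" "le a x" "le y b" "le b y'"
      unfolding interval_def by auto
    have "a \<in> I" "b \<notin> I"
      using ab S ideal_down by blast+
    moreover have "le a b"
      using ab S le_trans_on[of a x y] le_trans_on[of a y b] by blast
    ultimately show "(a, b) \<in> bier_pairs \<and> le x' a \<and> le a x \<and> le y b \<and> le b y'"
      using ab by simp
  qed
  note pair_iff = this
  show ?thesis
  proof (rule set_eqI)
    fix z
    show "z \<in> interval B (bier_le le) (Some (x', y')) (Some (x, y)) \<longleftrightarrow>
      z \<in> Some ` (interval S le x' x \<times> interval S le y y')"
    proof (cases z)
      case None
      then show ?thesis
        unfolding interval_def by auto
    next
      case (Some p)
      moreover obtain a b where "p = (a, b)"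
        by fastforce
      ultimately show ?thesis
        using pair_iff[of a b] unfolding interval_def by (auto simp: prod_le_def)
    qed
  qed
qed

lemma interval_bier_iso_prod:
  assumes "Some (x', y') \<in> B" "Some (x, y) \<in> B" "le x' x" "le y y'"
  shows "poset_iso (interval B (bier_le le) (Some (x', y')) (Some (x, y))) (bier_le le)
    (interval S le x' x \<times> interval S le y y') le_pair"
proof -
  let ?T = "interval S le x' x \<times> interval S le y y'"
  have "bij_betw the (Some ` ?T) ?T"
    by (rule bij_betw_imageI) (auto simp: inj_on_def image_image)
  then show ?thesis
    unfolding poset_iso_def interval_bier_Some[OF assms] by (intro exI[of _ the]) auto
qed

lemma bier_sup_exists:
  assumes L: "is_lattice S le" and ab: "a \<in> B" "b \<in> B"
  shows "\<exists>s\<in>B. bier_le le a s \<and> bier_le le b s \<and> (\<forall>u\<in>B. bier_le le a u \<and> bier_le le b u \<longrightarrow> bier_le le s u)"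
proof (cases "a = None \<or> b = None")
  case True
  then show ?thesis
    by (intro bexI[of _ None]) auto
next
  case False
  then obtain a1 a2 b1 b2 where ab': "a = Some (a1, a2)" "b = Some (b1, b2)"
    by (cases a; cases b) auto
  have A: "a1 \<in> S" "a2 \<in> S" "b1 \<in> S" "b2 \<in> S"
    using ab ab' ideal_subset by auto
  obtain s1 where s1: "s1 \<in> S" "le a1 s1" "le b1 s1" "\<forall>u\<in>S. le a1 u \<and> le b1 u \<longrightarrow> le s1 u"
    using L A unfolding is_lattice_def by blast
  obtain i2 where i2: "i2 \<in> S" "le i2 a2" "le i2 b2" "\<forall>u\<in>S. le u a2 \<and> le u b2 \<longrightarrow> le u i2"
    using L A unfolding is_lattice_def by blast
  have below: "le s1 u1 \<and> le u2 i2"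
    if "Some (u1, u2) \<in> B" "bier_le le a (Some (u1, u2))" "bier_le le b (Some (u1, u2))" for u1 u2
    using that ab' s1 i2 ideal_subset by (auto simp: prod_le_def)
  show ?thesis
  proof (cases "(s1, i2) \<in> bier_pairs")
    case True
    show ?thesis
    proof (intro bexI[of _ "Some (s1, i2)"] conjI ballI impI)
      fix u assume "u \<in> B" "bier_le le a u \<and> bier_le le b u"
      then show "bier_le le (Some (s1, i2)) u"
        using below by (cases u) (auto simp: prod_le_def)
    qed (use True ab' s1 i2 in \<open>auto simp: prod_le_def\<close>)
  next
    case False
    have "u = None" if "u \<in> B" "bier_le le a u" "bier_le le b u" for u
    proof (rule ccontr)
      assume "u \<noteq> None"
      then obtain u1 u2 where "u = Some (u1, u2)"
        by auto
      then have "u1 \<in> I" "u2 \<in> S" "u2 \<notin> I" "le u1 u2" "le s1 u1" "le u2 i2"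
        using that below by auto
      then have "s1 \<in> I" "i2 \<notin> I" "le s1 i2"
        using s1(1) i2(1) ideal_subset ideal_down le_trans_on[of s1 u1 u2] le_trans_on[of s1 u2 i2]
        by blast+
      then show False
        using False i2(1) by simp
    qed
    then show ?thesis
      by (intro bexI[of _ None]) auto
  qed
qed

lemma bier_inf_exists:
  assumes L: "is_lattice S le" and ab: "a \<in> B" "b \<in> B"
  shows "\<exists>i\<in>B. bier_le le i a \<and> bier_le le i b \<and> (\<forall>u\<in>B. bier_le le u a \<and> bier_le le u b \<longrightarrow> bier_le le u i)"
proof (cases "a = None \<or> b = None")
  case True
  then show ?thesis
    using ab poset_on_refl[OF poset_bier] by (elim disjE; intro bexI[of _ b] bexI[of _ a]) auto
next
  case False
  then obtain a1 a2 b1 b2 where ab': "a = Some (a1, a2)" "b = Some (b1, b2)"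
    by (cases a; cases b) auto
  have A: "a1 \<in> I" "a2 \<notin> I" "le a1 a2" "a1 \<in> S" "a2 \<in> S" "b1 \<in> S" "b2 \<in> S"
    using ab ab' ideal_subset by auto
  obtain i1 where i1: "i1 \<in> S" "le i1 a1" "le i1 b1" "\<forall>u\<in>S. le u a1 \<and> le u b1 \<longrightarrow> le u i1"
    using L A unfolding is_lattice_def by blast
  obtain s2 where s2: "s2 \<in> S" "le a2 s2" "le b2 s2" "\<forall>u\<in>S. le a2 u \<and> le b2 u \<longrightarrow> le s2 u"
    using L A unfolding is_lattice_def by blast
  have "i1 \<in> I" "s2 \<notin> I" "le i1 s2"
    using A i1 s2 ideal_down le_trans_on[of i1 a1 a2] le_trans_on[of i1 a2 s2] by blast+
  then have "Some (i1, s2) \<in> B"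
    using s2(1) by simp
  show ?thesis
  proof (intro bexI[of _ "Some (i1, s2)"] conjI ballI impI)
    fix u assume "u \<in> B" "bier_le le u a \<and> bier_le le u b"
    then show "bier_le le u (Some (i1, s2))"
      using ab' i1 s2 ideal_subset by (cases u) (auto simp: prod_le_def)
  qed (use \<open>Some (i1, s2) \<in> B\<close> ab' i1 s2 in \<open>auto simp: prod_le_def\<close>)
qed

lemma lattice_bier: "is_lattice S le \<Longrightarrow> is_lattice B (bier_le le)"
  unfolding is_lattice_def[of B] using bier_sup_exists bier_inf_exists by blast
end

lemma card_option_set:
  assumes "finite (Some -` D)"
  shows "finite D" "card D = (if None \<in> D then Suc (card (Some -` D)) else card (Some -` D))"
proof -
  have D: "D = (if None \<in> D then insert None (Some ` (Some -` D)) else Some ` (Some -` D))"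
    by (auto intro: ccontr simp: notin_range_Some)
  have "card (Some ` (Some -` D)) = card (Some -` D)" "None \<notin> Some ` (Some -` D)"
    by (simp_all add: card_image del: image_vimage_eq)
  then show "finite D" "card D = (if None \<in> D then Suc (card (Some -` D)) else card (Some -` D))"
    using assms by (subst D; simp del: image_vimage_eq)+
qed

definition endpoints :: "('a \<times> 'a) option set \<Rightarrow> 'a set" where
  "endpoints D = fst ` (Some -` D) \<union> snd ` (Some -` D)"

locale finite_bounded_poset_ideal = bounded_poset_ideal +
  assumes finite_length: "finite_length S le"
begin

lemma chain_bier_pairs:
  assumes "chain_on B (bier_le le) D"
  shows "chain_on bier_pairs le_pair (Some -` D)"
proof -
  have D: "D \<subseteq> B" and cmp: "\<forall>a\<in>D. \<forall>b\<in>D. bier_le le a b \<or> bier_le le b a"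
    using assms unfolding chain_on_def by blast+
  have "le_pair p q \<or> le_pair q p" if "Some p \<in> D" "Some q \<in> D" for p q
  proof -
    have "bier_le le (Some p) (Some q) \<or> bier_le le (Some q) (Some p)"
      using cmp that by blast
    then show ?thesis by simp
  qed
  moreover have "Some -` D \<subseteq> bier_pairs"
    using D by auto
  ultimately show ?thesis
    unfolding chain_on_def by blast
qed

lemma finite_length_bier: "finite_length B (bier_le le)"
proof -
  have "finite_length (S \<times> S) le_pair"
    using finite_length_prod finite_length finite_length_converse by blast
  then obtain n where n: "\<And>E. chain_on bier_pairs le_pair E \<Longrightarrow> finite E \<and> card E \<le> n"
    using finite_length_subset[OF _ bier_pairs_subset] unfolding finite_length_def by blast
  have "finite D \<and> card D \<le> Suc n" if "chain_on B (bier_le le) D" for D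
    using n[OF chain_bier_pairs[OF that]] card_option_set[of D] by auto
  then show ?thesis
    unfolding finite_length_def by blast
qed

lemma chain_endpoints:
  assumes "chain_on B (bier_le le) D"
  shows "chain_on S le (endpoints D)"
proof -
  let ?E = "Some -` D"
  have E: "?E \<subseteq> bier_pairs" "\<forall>p\<in>?E. \<forall>q\<in>?E. le_pair p q \<or> le_pair q p"
    using chain_bier_pairs[OF assms] unfolding chain_on_def by blast+
  have ES: "fst p \<in> S" "snd p \<in> S" "le (fst p) (snd p)" if "p \<in> ?E" for p
    using that E(1) bier_pairsD by blast+
  have "le (fst p) (snd q)" if "p \<in> ?E" "q \<in> ?E" for p q
    using E(2) that ES le_trans_on[of "fst p" "fst q" "snd q"] le_trans_on[of "fst p" "snd p" "snd q"]
    unfolding prod_le_def by blast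
  then show ?thesis
    using E(2) ES unfolding chain_on_def endpoints_def prod_le_def by blast
qed

lemma maximal_chain_bier_insert:
  assumes D: "maximal_chain_on B (bier_le le) D" and w: "w \<in> bier_pairs"
    and cmp: "\<forall>q\<in>Some -` D. le_pair w q \<or> le_pair q w"
  shows "Some w \<in> D"
proof (rule maximal_chain_on_memI[OF D])
  show "bier_le le (Some w) (Some w)"
    using poset_on_refl[OF poset_bier_pairs w] by simp
  show "\<forall>d\<in>D. bier_le le (Some w) d \<or> bier_le le d (Some w)"
  proof
    fix d assume "d \<in> D"
    then show "bier_le le (Some w) d \<or> bier_le le d (Some w)"
      using cmp by (cases d) auto
  qed
qed (use w in simp)

lemma maximal_chain_bier_bottom:
  assumes D: "maximal_chain_on B (bier_le le) D"
  shows "(hat0, hat1) \<in> Some -` D"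
proof -
  have "chain_on bier_pairs le_pair (Some -` D)"
    using D unfolding maximal_chain_on_def by (blast intro: chain_bier_pairs)
  then have "\<forall>q\<in>Some -` D. le_pair (hat0, hat1) q \<or> le_pair q (hat0, hat1)"
    using bottom_pair(2) unfolding chain_on_def by blast
  then have "Some (hat0, hat1) \<in> D"
    using maximal_chain_bier_insert[OF D bottom_pair(1)] by blast
  then show ?thesis by simp
qed

lemma maximal_chain_bier_top:
  assumes "maximal_chain_on B (bier_le le) D"
  shows "None \<in> D"
  using maximal_chain_on_memI[OF assms] by simp

lemma maximal_chain_bier_pairs:
  assumes D: "maximal_chain_on B (bier_le le) D"
  shows "maximal_chain_on bier_pairs le_pair (Some -` D)"
  unfolding maximal_chain_on_def
proof (intro conjI allI impI)
  show "chain_on bier_pairs le_pair (Some -` D)"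
    using D unfolding maximal_chain_on_def by (blast intro: chain_bier_pairs)
  fix E assume E: "chain_on bier_pairs le_pair E \<and> Some -` D \<subseteq> E"
  have "Some w \<in> D" if "w \<in> E" for w
    using E that by (intro maximal_chain_bier_insert[OF D]) (auto simp: chain_on_def)
  then show "E = Some -` D"
    using E by blast
qed

lemma maximal_chain_bier_between:
  assumes D: "maximal_chain_on B (bier_le le) D" and w: "w \<in> bier_pairs"
    and es: "es \<in> Some -` D" "le_pair es w"
    and split: "\<forall>e\<in>Some -` D. le_pair e es \<or> le_pair w e"
  shows "w \<in> Some -` D"
proof -
  have "es \<in> bier_pairs" "Some -` D \<subseteq> bier_pairs"
    using es(1) chain_bier_pairs D unfolding maximal_chain_on_def chain_on_def by blast+
  then have "le_pair e w" if "e \<in> Some -` D" "le_pair e es" for e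
    using that w es(2) poset_on_trans[OF poset_bier_pairs, of e es w] by blast
  then show ?thesis
    using maximal_chain_bier_insert[OF D w] split by blast
qed

lemma finite_maximal_chain_bier_pairs:
  assumes "maximal_chain_on B (bier_le le) D"
  shows "finite (Some -` D)"
  using assms finite_length_bier finite_vimageI[of D Some]
  unfolding maximal_chain_on_def finite_length_def by (meson injI option.inject)

lemma card_maximal_chain_bier:
  assumes D: "maximal_chain_on B (bier_le le) D"
  shows "card D = card (endpoints D)"
proof -
  let ?E = "Some -` D"
  have fin: "finite ?E"
    using D by (rule finite_maximal_chain_bier_pairs)
  have max: "maximal_chain_on bier_pairs le_pair ?E"
    using D by (rule maximal_chain_bier_pairs)
  then have chain: "chain_on bier_pairs le_pair ?E"
    unfolding maximal_chain_on_def by blast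
  have E: "?E \<subseteq> bier_pairs" "chain_on (S \<times> S) le_pair ?E"
    using chain chain_on_mono[OF chain bier_pairs_subset] unfolding chain_on_def by blast+
  have "?E \<noteq> {}"
    using maximal_chain_bier_bottom[OF D] by blast
  have "fst p = fst q \<or> snd p = snd q" if "covers_on ?E le_pair p q" for p q
    using poset poset_on_converse[OF poset] bier_pairs_subset bier_pairs_mix max that
    by (rule maximal_chain_covers_fix_coordinate)
  with poset poset_on_converse[OF poset] E(2) fin \<open>?E \<noteq> {}\<close>
  have "card (fst ` ?E) + card (snd ` ?E) = Suc (card ?E)"
    by (rule card_fst_snd_saturated_chain)
  moreover have "fst ` ?E \<subseteq> I" "snd ` ?E \<inter> I = {}"
    using E(1) bier_pairsD(1,4) by force+
  then have "fst ` ?E \<inter> snd ` ?E = {}"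
    by blast
  then have "card (endpoints D) = card (fst ` ?E) + card (snd ` ?E)"
    unfolding endpoints_def using fin by (simp add: card_Un_disjoint)
  moreover have "card D = Suc (card ?E)"
    using card_option_set[OF fin] maximal_chain_bier_top[OF D] by simp
  ultimately show ?thesis
    by simp
qed

lemma maximal_chain_bier_greatest_in:
  assumes D: "maximal_chain_on B (bier_le le) D" and L: "L \<subseteq> Some -` D" "L \<noteq> {}"
  obtains es where "es \<in> L" "\<forall>e\<in>L. le_pair e es"
proof -
  have "chain_on bier_pairs le_pair L"
    using D chain_bier_pairs chain_on_subset[OF _ L(1)] unfolding maximal_chain_on_def by blast
  moreover have "finite L"
    using finite_maximal_chain_bier_pairs[OF D] L(1) by (rule finite_subset[rotated])
  ultimately show ?thesis
    using finite_chain_has_greatest[OF poset_bier_pairs] L(2) that by blast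
qed

lemma endpoints_maximal_lower:
  assumes D: "maximal_chain_on B (bier_le le) D" and z: "z \<in> I"
    and cmp: "\<forall>w\<in>endpoints D. le z w \<or> le w z"
  shows "z \<in> endpoints D"
proof -
  \<comment> \<open>Replace the lower end of the last interval whose lower end lies below z by z.\<close>
  let ?E = "Some -` D"
  let ?L = "{e \<in> ?E. le (fst e) z}"
  have chain: "chain_on bier_pairs le_pair ?E"
    using D chain_bier_pairs unfolding maximal_chain_on_def by blast
  have E: "?E \<subseteq> bier_pairs" "\<forall>p\<in>?E. \<forall>q\<in>?E. le_pair p q \<or> le_pair q p"
    using chain unfolding chain_on_def by blast+
  have zS: "z \<in> S"
    using z ideal_subset by blast
  have "(hat0, hat1) \<in> ?L"
    using maximal_chain_bier_bottom[OF D] hat0 zS by simp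
  then obtain es where es: "es \<in> ?L" "\<forall>e\<in>?L. le_pair e es"
    using maximal_chain_bier_greatest_in[OF D, of ?L] by blast
  have es_pair: "fst es \<in> S" "snd es \<in> S" "snd es \<notin> I"
    using es(1) E(1) bier_pairsD by blast+
  have "le z (snd es) \<or> le (snd es) z"
    using cmp es(1) unfolding endpoints_def by blast
  then have "le z (snd es)"
    using ideal_down[of "snd es" z] es_pair z by blast
  then have w: "(z, snd es) \<in> bier_pairs"
    using z es_pair by simp
  have "le_pair e es \<or> le_pair (z, snd es) e" if e: "e \<in> ?E" for e
  proof (cases "le (fst e) z")
    case True
    then show ?thesis using es e by blast
  next
    case False
    then have "le z (fst e)"
      using cmp e unfolding endpoints_def by blast
    moreover have "le_pair es e"
      using E(2) e es(1) False zS le_trans_on[of "fst e" "fst es" z] bier_pairsD[of e] E(1) es_pair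
      unfolding prod_le_def by blast
    ultimately show ?thesis
      unfolding prod_le_def by simp
  qed
  moreover have "le_pair es (z, snd es)"
    using es(1) es_pair le_refl_on unfolding prod_le_def by simp
  ultimately have "(z, snd es) \<in> ?E"
    using maximal_chain_bier_between[OF D w] es(1) by blast
  then show ?thesis
    unfolding endpoints_def by force
qed

lemma endpoints_maximal_upper:
  assumes D: "maximal_chain_on B (bier_le le) D" and z: "z \<in> S" "z \<notin> I"
    and cmp: "\<forall>w\<in>endpoints D. le z w \<or> le w z"
  shows "z \<in> endpoints D"
proof -
  \<comment> \<open>Replace the upper end of the last interval whose upper end lies above z by z.\<close>
  let ?E = "Some -` D"
  let ?L = "{e \<in> ?E. le z (snd e)}"
  have chain: "chain_on bier_pairs le_pair ?E"
    using D chain_bier_pairs unfolding maximal_chain_on_def by blast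
  have E: "?E \<subseteq> bier_pairs" "\<forall>p\<in>?E. \<forall>q\<in>?E. le_pair p q \<or> le_pair q p"
    using chain unfolding chain_on_def by blast+
  have "(hat0, hat1) \<in> ?L"
    using maximal_chain_bier_bottom[OF D] hat1 z by simp
  then obtain es where es: "es \<in> ?L" "\<forall>e\<in>?L. le_pair e es"
    using maximal_chain_bier_greatest_in[OF D, of ?L] by blast
  have es_pair: "fst es \<in> S" "fst es \<in> I" "snd es \<in> S"
    using es(1) E(1) bier_pairsD by blast+
  have "le z (fst es) \<or> le (fst es) z"
    using cmp es(1) unfolding endpoints_def by blast
  then have "le (fst es) z"
    using ideal_down[of z "fst es"] es_pair z by blast
  then have w: "(fst es, z) \<in> bier_pairs"
    using z es_pair by simp
  have "le_pair e es \<or> le_pair (fst es, z) e" if e: "e \<in> ?E" for e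
  proof (cases "le z (snd e)")
    case True
    then show ?thesis using es e by blast
  next
    case False
    then have "le (snd e) z"
      using cmp e unfolding endpoints_def by blast
    moreover have "le_pair es e"
      using E(2) e es(1) False z le_trans_on[of z "snd es" "snd e"] bier_pairsD[of e] E(1) es_pair
      unfolding prod_le_def by blast
    ultimately show ?thesis
      unfolding prod_le_def by simp
  qed
  moreover have "le_pair es (fst es, z)"
    using es(1) es_pair le_refl_on unfolding prod_le_def by simp
  ultimately have "(fst es, z) \<in> ?E"
    using maximal_chain_bier_between[OF D w] es(1) by blast
  then show ?thesis
    unfolding endpoints_def by force
qed

lemma maximal_chain_endpoints:
  assumes D: "maximal_chain_on B (bier_le le) D"
  shows "maximal_chain_on S le (endpoints D)"
  unfolding maximal_chain_on_def
proof (intro conjI allI impI)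
  show "chain_on S le (endpoints D)"
    using D chain_endpoints unfolding maximal_chain_on_def by blast
  fix C assume C: "chain_on S le C \<and> endpoints D \<subseteq> C"
  have "z \<in> endpoints D" if "z \<in> C" for z
  proof -
    have "z \<in> S" "\<forall>w\<in>endpoints D. le z w \<or> le w z"
      using C that unfolding chain_on_def by blast+
    then show ?thesis
      using endpoints_maximal_lower[OF D] endpoints_maximal_upper[OF D] by blast
  qed
  then show "C = endpoints D"
    using C by blast
qed

lemma maximal_chain_lift:
  assumes C: "maximal_chain_on S le C"
  obtains D where "maximal_chain_on B (bier_le le) D" "endpoints D = C"
proof -
  have chain: "chain_on S le C"
    using C unfolding maximal_chain_on_def by blast
  have CS: "C \<subseteq> S" and tot: "\<forall>a\<in>C. \<forall>b\<in>C. le a b \<or> le b a"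
    using chain unfolding chain_on_def by blast+
  have "finite C"
    using chain finite_length unfolding finite_length_def by blast
  have "hat0 \<in> C"
    using CS hat0 le_refl_on by (intro maximal_chain_on_memI[OF C]) auto
  then obtain m where m: "m \<in> C \<inter> I" "\<forall>c\<in>C \<inter> I. le c m"
    using finite_chain_has_greatest[OF poset chain_on_subset[OF chain, of "C \<inter> I"]] \<open>finite C\<close>
      hat0_in_ideal by blast
  have m_below: "le m c" if "c \<in> C - I" for c
    using tot m that ideal_down CS by blast
  let ?P0 = "(\<lambda>c. (c, hat1)) ` (C \<inter> I) \<union> Pair m ` (C - I)"
  have "?P0 \<subseteq> bier_pairs"
    using CS m m_below hat1 hat1_notin_ideal by auto
  have "le_pair (c, hat1) (c', hat1) \<or> le_pair (c', hat1) (c, hat1)" if "c \<in> C" "c' \<in> C" for c c'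
    using tot that le_refl_on[OF hat1(1)] unfolding prod_le_def by auto
  moreover have "le_pair (c, hat1) (m, d)" if "c \<in> C \<inter> I" "d \<in> C" for c d
    using m(2) that CS hat1(2) unfolding prod_le_def by auto
  moreover have "le_pair (m, d) (m, d') \<or> le_pair (m, d') (m, d)" if "d \<in> C" "d' \<in> C" for d d'
    using tot that m(1) CS le_refl_on unfolding prod_le_def by auto
  ultimately have "le_pair p q \<or> le_pair q p" if "p \<in> ?P0" "q \<in> ?P0" for p q
    using that by blast
  then have "chain_on B (bier_le le) (Some ` ?P0)"
    using \<open>?P0 \<subseteq> bier_pairs\<close> unfolding chain_on_def by auto
  then obtain D where D: "maximal_chain_on B (bier_le le) D" "Some ` ?P0 \<subseteq> D"
    using maximal_chain_extends[OF finite_length_bier] by blast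
  have "C \<subseteq> endpoints D"
  proof
    fix c assume "c \<in> C"
    then have "Some (c, hat1) \<in> D \<or> Some (m, c) \<in> D"
      using D(2) by blast
    then show "c \<in> endpoints D"
      unfolding endpoints_def by force
  qed
  moreover have "chain_on S le (endpoints D)"
    using D(1) chain_endpoints unfolding maximal_chain_on_def by blast
  ultimately have "endpoints D = C"
    using C unfolding maximal_chain_on_def by blast
  with D(1) that show ?thesis
    by blast
qed

lemma plength_bier: "plength B (bier_le le) = plength S le"
proof (rule antisym)
  have "B \<noteq> {}"
    using None_in_bier_carrier by blast
  then obtain D where D: "chain_on B (bier_le le) D" "card D = Suc (plength B (bier_le le))"
    using obtain_longest_chain[OF poset_bier finite_length_bier] by blast
  then have "maximal_chain_on B (bier_le le) D"
    using finite_length_bier by (intro maximal_chain_on_if_longest)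
  then have "card D = card (endpoints D)" "chain_on S le (endpoints D)"
    using card_maximal_chain_bier chain_endpoints unfolding maximal_chain_on_def by blast+
  then show "plength B (bier_le le) \<le> plength S le"
    using card_chain_le_plength[OF finite_length] D(2) by fastforce
next
  obtain C where C: "chain_on S le C" "card C = Suc (plength S le)"
    using obtain_longest_chain[OF poset finite_length] hat0(1) by blast
  then have "maximal_chain_on S le C"
    using finite_length by (intro maximal_chain_on_if_longest)
  then obtain D where D: "maximal_chain_on B (bier_le le) D" "endpoints D = C"
    by (rule maximal_chain_lift)
  then have "card D = card C" "chain_on B (bier_le le) D"
    using card_maximal_chain_bier unfolding maximal_chain_on_def by blast+
  then show "plength S le \<le> plength B (bier_le le)"
    using card_chain_le_plength[OF finite_length_bier] C(2) by fastforce
qed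

lemma graded_bier_iff: "graded B (bier_le le) \<longleftrightarrow> graded S le"
proof
  assume graded: "graded B (bier_le le)"
  show "graded S le"
    unfolding graded_def
  proof (intro conjI bounded_poset_S allI impI)
    fix C1 C2 assume "maximal_chain_on S le C1 \<and> maximal_chain_on S le C2"
    then obtain D1 D2 where
      "maximal_chain_on B (bier_le le) D1" "endpoints D1 = C1"
      "maximal_chain_on B (bier_le le) D2" "endpoints D2 = C2"
      using maximal_chain_lift by metis
    then show "card C1 = card C2"
      using graded card_maximal_chain_bier unfolding graded_def by metis
  qed
next
  assume graded: "graded S le"
  show "graded B (bier_le le)"
    unfolding graded_def
  proof (intro conjI bounded_bier allI impI)
    fix D1 D2 assume "maximal_chain_on B (bier_le le) D1 \<and> maximal_chain_on B (bier_le le) D2"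
    then show "card D1 = card D2"
      using graded card_maximal_chain_bier maximal_chain_endpoints unfolding graded_def by metis
  qed
qed

lemma prank_bier:
  assumes xy: "Some (x, y) \<in> B"
  shows "prank B (bier_le le) (Some (x, y)) = prank S le x + plength {z \<in> S. le y z} le"
proof -
  let ?A = "{z \<in> S. le z x}" and ?U = "{z \<in> S. le y z}"
  have "x \<in> S" "y \<in> S" "le x y"
    using xy ideal_subset by auto
  then have "x \<in> ?A" "y \<in> ?U"
    using le_refl_on by auto
  have "interval S le hat0 x = ?A" "interval S le y hat1 = ?U"
    unfolding interval_def using hat0 hat1 by auto
  moreover have "{z \<in> B. bier_le le z (Some (x, y))} = interval B (bier_le le) (Some (hat0, hat1)) (Some (x, y))"
    using bier_bottom unfolding interval_def by blast
  ultimately have down: "{z \<in> B. bier_le le z (Some (x, y))} = Some ` (?A \<times> ?U)"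
    using interval_bier_Some[OF _ xy] bottom_pair hat0 hat1 \<open>x \<in> S\<close> \<open>y \<in> S\<close> by simp
  have "plength (Some ` (?A \<times> ?U)) (bier_le le) = plength (?A \<times> ?U) le_pair"
    by (rule plength_image) simp_all
  also have "\<dots> = plength ?A le + plength ?U (\<lambda>a b. le b a)"
  proof (rule plength_prod)
    show "poset_on ?A le"
      using poset by (rule poset_on_subset) blast
    show "poset_on ?U (\<lambda>a b. le b a)"
      using poset_on_converse[OF poset] by (rule poset_on_subset) blast
    show "finite_length ?A le"
      using finite_length by (rule finite_length_subset) blast
    have "finite_length S (\<lambda>a b. le b a)"
      using finite_length finite_length_converse[of S le] by blast
    then show "finite_length ?U (\<lambda>a b. le b a)"
      by (rule finite_length_subset) blast
    show "?A \<noteq> {}" "?U \<noteq> {}"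
      using \<open>x \<in> ?A\<close> \<open>y \<in> ?U\<close> by blast+
  qed
  also have "\<dots> = plength ?A le + plength ?U le"
    using plength_converse[of ?U le] by simp
  finally show ?thesis
    unfolding prank_def down .
qed

end

theorem lemma1:
  fixes S :: "'a set" and le :: "'a \<Rightarrow> 'a \<Rightarrow> bool" and I :: "'a set"
  assumes bnd: "bounded_poset S le"
    and fl: "finite_length S le"
    and ideal: "proper_ideal S le I"
  shows
    "(finite_length (bier_carrier S le I) (bier_le le)
      \<and> plength (bier_carrier S le I) (bier_le le) = plength S le)
     \<and> (graded (bier_carrier S le I) (bier_le le) \<longleftrightarrow> graded S le)
     \<and> (graded S le \<longrightarrow> (\<forall>x y. x \<in> I \<and> y \<in> S - I \<and> le x y \<longrightarrow>
           prank (bier_carrier S le I) (bier_le le) (Some (x, y))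
             = prank S le x + (plength S le - prank S le y)))
     \<and> (\<forall>x y. Some (x, y) \<in> bier_carrier S le I \<longrightarrow>
           poset_iso (interval (bier_carrier S le I) (bier_le le) (Some (x, y)) None) (bier_le le)
                     (bier_carrier (interval S le x y) le (I \<inter> interval S le x y)) (bier_le le))
     \<and> (\<forall>x' y' x y. Some (x', y') \<in> bier_carrier S le I \<and> Some (x, y) \<in> bier_carrier S le I
           \<and> bier_le le (Some (x', y')) (Some (x, y)) \<longrightarrow>
           poset_iso (interval (bier_carrier S le I) (bier_le le) (Some (x', y')) (Some (x, y))) (bier_le le)
                     (interval S le x' x \<times> interval S le y y') (prod_le le (\<lambda>a b. le b a)))
     \<and> (is_lattice S le \<longrightarrow> is_lattice (bier_carrier S le I) (bier_le le))"
proof -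
  obtain hat0 hat1 where "hat0 \<in> S" "\<forall>z\<in>S. le hat0 z" "hat1 \<in> S" "\<forall>z\<in>S. le z hat1"
    using bnd unfolding bounded_poset_def by blast
  then interpret finite_bounded_poset_ideal S le I hat0 hat1
    using bnd fl ideal unfolding bounded_poset_def by unfold_locales auto
  have rank: "prank B (bier_le le) (Some (x, y)) = prank S le x + (plength S le - prank S le y)"
    if "graded S le" "x \<in> I" "y \<in> S - I" "le x y" for x y
    using prank_bier[of x y] plength_up_set_add_prank[OF that(1) fl, of y] that by simp
  have top: "poset_iso (interval B (bier_le le) (Some (x, y)) None) (bier_le le)
      (bier_carrier (interval S le x y) le (I \<inter> interval S le x y)) (bier_le le)"
    if "Some (x, y) \<in> B" for x y
    unfolding interval_bier_top[OF that] by (rule poset_iso_refl)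
  have lower: "poset_iso (interval B (bier_le le) (Some (x', y')) (Some (x, y))) (bier_le le)
      (interval S le x' x \<times> interval S le y y') le_pair"
    if "Some (x', y') \<in> B" "Some (x, y) \<in> B" "bier_le le (Some (x', y')) (Some (x, y))" for x' y' x y
    using that by (intro interval_bier_iso_prod) (simp_all add: prod_le_def)
  show ?thesis
    using finite_length_bier plength_bier graded_bier_iff rank top lower lattice_bier by blast
qed

end
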